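(* Let $(G_n)_{n\in\mathbb{N}}$ be an $\mathrm{FO}$-convergent sequence of finite graphs with modeling limit $L$, and let $\xi(x)$ be a formula in the language of graphs with one free variable such that $\xi(L)$ is finite and nonempty, $\xi(L)$ contains no nonempty proper subset of the form $\chi(L)$ for a formula $\chi(x)$ in the language of graphs, and $|\xi(G_n)|=|\xi(L)|$ for every $n$. Let $\phi_1,\phi_2,\dots$ be an enumeration of all first-order formulas in the language of rooted graphs. Then there exist, for each $i\in\mathbb{N}$, a sequence $(r^i_n)_{n\in\mathbb{N}}$ with $r^i_n\in\xi(G_n)$ and a vertex $r^i\in\xi(L)$ such that for all $j\le i$ we have $\lim_{n\to\infty}\langle\phi_j,(G_n,r^i_n)\rangle=\langle\phi_j,(L,r^i)\rangle$, and moreover $\langle\phi_j,(L,r^i)\rangle=\langle\phi_j,(L,r^{i'})\rangle$ for every $i'\ge i$.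
   Context: Graphs are first-order structures in the language with one binary (edge) relation. For a formula $\phi$ with $p$ free variables and a structure $G$, $\phi(G)=\{\mathbf{v}\in V(G)^p : G\models\phi(\mathbf{v})\}$. The Stone pairing of $\phi$ ($p\ge1$) with a finite graph $G$ is $\langle\phi,G\rangle=|\phi(G)|/|V(G)|^p$; for sentences it is $1$ if $G\models\phi$ and $0$ otherwise. A sequence of finite graphs is $\mathrm{FO}$-convergent if $(\langle\phi,G_n\rangle)$ converges for every formula $\phi$. A modeling is a graph $L$ whose vertex set is a standard Borel space with a probability measure $\nu$ such that every first-order definable set $\phi(L)\subseteq V(L)^p$ is measurable; $\langle\phi,L\rangle=\nu^{\otimes p}(\phi(L))$ (and $1$/$0$ for sentences). $L$ is a modeling limit of $(G_n)$ if $\lim_n\langle\phi,G_n\rangle=\langle\phi,L\rangle$ for all $\phi$. The language of rooted graphs adds a constant symbol $\mathrm{Root}$; $(G,r)$ is $G$ with $\mathrm{Root}$ interpreted as $r$, and Stone pairings with rooted structures are defined in the same way. *)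

theory Defs
  imports "HOL-Probability.Probability"
begin

datatype gterm = Var nat | Root

datatype fm = Eq gterm gterm | Adj gterm gterm | Neg fm | Conj fm fm | Exists nat fm

fun tvars :: "gterm \<Rightarrow> nat set" where
  "tvars (Var i) = {i}"
| "tvars Root = {}"

fun fv :: "fm \<Rightarrow> nat set" where
  "fv (Eq s t) = tvars s \<union> tvars t"
| "fv (Adj s t) = tvars s \<union> tvars t"
| "fv (Neg f) = fv f"
| "fv (Conj f g) = fv f \<union> fv g"
| "fv (Exists x f) = fv f - {x}"

fun troot :: "gterm \<Rightarrow> bool" where
  "troot (Var i) = False"
| "troot Root = True"

text \<open>A formula of the language of graphs = a formula not using the constant Root.\<close>
fun graph_fm :: "fm \<Rightarrow> bool" where
  "graph_fm (Eq s t) = (\<not> troot s \<and> \<not> troot t)"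
| "graph_fm (Adj s t) = (\<not> troot s \<and> \<not> troot t)"
| "graph_fm (Neg f) = graph_fm f"
| "graph_fm (Conj f g) = (graph_fm f \<and> graph_fm g)"
| "graph_fm (Exists x f) = graph_fm f"

fun tval :: "'v \<Rightarrow> (nat \<Rightarrow> 'v) \<Rightarrow> gterm \<Rightarrow> 'v" where
  "tval r a (Var i) = a i"
| "tval r a Root = r"

fun sat :: "'v set \<Rightarrow> ('v \<Rightarrow> 'v \<Rightarrow> bool) \<Rightarrow> 'v \<Rightarrow> (nat \<Rightarrow> 'v) \<Rightarrow> fm \<Rightarrow> bool" where
  "sat V E r a (Eq s t) = (tval r a s = tval r a t)"
| "sat V E r a (Adj s t) = E (tval r a s) (tval r a t)"
| "sat V E r a (Neg f) = (\<not> sat V E r a f)"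
| "sat V E r a (Conj f g) = (sat V E r a f \<and> sat V E r a g)"
| "sat V E r a (Exists x f) = (\<exists>v\<in>V. sat V E r (a(x := v)) f)"

text \<open>phi(G): tuples indexed by the free variables of phi (an element of V^p, p = |fv phi|).\<close>
definition def_tuples :: "'v set \<Rightarrow> ('v \<Rightarrow> 'v \<Rightarrow> bool) \<Rightarrow> 'v \<Rightarrow> fm \<Rightarrow> (nat \<Rightarrow> 'v) set" where
  "def_tuples V E r f = {a \<in> fv f \<rightarrow>\<^sub>E V. sat V E r a f}"

definition stone :: "'v set \<Rightarrow> ('v \<Rightarrow> 'v \<Rightarrow> bool) \<Rightarrow> 'v \<Rightarrow> fm \<Rightarrow> real" where
  "stone V E r f =
     (if fv f = {} then (if sat V E r (\<lambda>_. undefined) f then 1 else 0)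
      else real (card (def_tuples V E r f)) / real (card V) ^ card (fv f))"

definition stone_mod :: "'v measure \<Rightarrow> ('v \<Rightarrow> 'v \<Rightarrow> bool) \<Rightarrow> 'v \<Rightarrow> fm \<Rightarrow> real" where
  "stone_mod M E r f =
     (if fv f = {} then (if sat (space M) E r (\<lambda>_. undefined) f then 1 else 0)
      else measure (PiM (fv f) (\<lambda>_. M)) (def_tuples (space M) E r f))"

text \<open>A modeling: vertex set is a standard Borel space (here: the Borel space of a Polish
  space, given as a type), carrying a probability measure, such that every first-order
  definable set (in the language of graphs) is measurable in the product sigma-algebra.\<close>
definition modeling :: "('v::polish_space) measure \<Rightarrow> ('v \<Rightarrow> 'v \<Rightarrow> bool) \<Rightarrow> bool" where
  "modeling M E \<longleftrightarrow> prob_space M \<and> sets M = sets borel \<and>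
     (\<forall>f r. graph_fm f \<longrightarrow> def_tuples (space M) E r f \<in> sets (PiM (fv f) (\<lambda>_. M)))"

definition def_set :: "'v set \<Rightarrow> ('v \<Rightarrow> 'v \<Rightarrow> bool) \<Rightarrow> fm \<Rightarrow> 'v set" where
  "def_set V E f = {v \<in> V. sat V E undefined (\<lambda>_. v) f}"

definition FO_convergent :: "(nat \<Rightarrow> 'a set) \<Rightarrow> (nat \<Rightarrow> 'a \<Rightarrow> 'a \<Rightarrow> bool) \<Rightarrow> bool" where
  "FO_convergent V E \<longleftrightarrow> (\<forall>f. graph_fm f \<longrightarrow> convergent (\<lambda>n. stone (V n) (E n) undefined f))"

definition modeling_limit ::
  "(nat \<Rightarrow> 'a set) \<Rightarrow> (nat \<Rightarrow> 'a \<Rightarrow> 'a \<Rightarrow> bool) \<Rightarrow> ('v::polish_space) measure \<Rightarrow> ('v \<Rightarrow> 'v \<Rightarrow> bool) \<Rightarrow> bool" where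
  "modeling_limit V E M F \<longleftrightarrow> modeling M F \<and>
     (\<forall>f. graph_fm f \<longrightarrow> (\<lambda>n. stone (V n) (E n) undefined f) \<longlonglongrightarrow> stone_mod M F undefined f)"

end

theory Submission
  imports Defs
begin

text \<open>
  Call the vector \<open>(\<langle>\<phi>\<^sub>0,(G,r)\<rangle>, \<dots>, \<langle>\<phi>\<^sub>i,(G,r)\<rangle>)\<close> the profile of a root \<open>r \<in> \<xi>(G)\<close>. For a rooted
  formula \<open>\<psi>\<close> and \<open>k \<ge> |\<xi>(G)|\<close>, the root sum \<open>\<Sum>r\<in>\<xi>(G). \<langle>\<psi>,(G,r)\<rangle>\<close> equals
  \<open>\<Sum>t=1..k. \<langle>\<theta>\<^sub>t,G\<rangle>\<close>, where the graph formula \<open>\<theta>\<^sub>t\<close> says that at least \<open>t\<close> roots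
  \<open>z \<in> \<xi>\<close> satisfy \<open>\<psi>\<close> with \<open>Root\<close> replaced by \<open>z\<close>. As \<open>|\<xi>(G\<^sub>n)| = |\<xi>(L)|\<close>, the root sums
  of \<open>G\<^sub>n\<close> thus converge to those of \<open>L\<close>. Stone pairings are multiplicative over conjunctions
  of formulas with disjoint free variables, so the sum over the roots of any polynomial in
  the profile converges as well. Given a root \<open>a\<close> of \<open>L\<close>, a polynomial that is nonnegative at
  all profiles of roots of \<open>L\<close>, positive at that of \<open>a\<close> and negative away from it shows that
  eventually some root of \<open>G\<^sub>n\<close> has a profile close to that of \<open>a\<close>. Hence every root of \<open>L\<close>
  is approximated, for all \<open>i\<close> at once.
\<close>

section \<open>Syntax: coincidence, renaming and elimination of the root\<close>

lemma finite_tvars [simp]: "finite (tvars t)"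
  by (cases t) auto

lemma finite_fv [simp]: "finite (fv f)"
  by (induction f) auto

lemma tval_cong: "(\<And>i. i \<in> tvars t \<Longrightarrow> a i = a' i) \<Longrightarrow> tval r a t = tval r a' t"
  by (cases t) auto

lemma sat_cong: "(\<And>i. i \<in> fv f \<Longrightarrow> a i = a' i) \<Longrightarrow> sat V E r a f = sat V E r a' f"
proof (induction f arbitrary: a a')
  case (Eq s t)
  have "tval r a s = tval r a' s" "tval r a t = tval r a' t"
    by (auto intro!: tval_cong Eq.prems)
  then show ?case by simp
next
  case (Adj s t)
  have "tval r a s = tval r a' s" "tval r a t = tval r a' t"
    by (auto intro!: tval_cong Adj.prems)
  then show ?case by simp
next
  case (Neg f)
  have "sat V E r a f = sat V E r a' f"
    by (auto intro!: Neg.IH Neg.prems)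
  then show ?case by simp
next
  case (Conj f g)
  have "sat V E r a f = sat V E r a' f" "sat V E r a g = sat V E r a' g"
    by (auto intro!: Conj.IH Conj.prems)
  then show ?case by simp
next
  case (Exists x f)
  have "sat V E r (a(x := v)) f = sat V E r (a'(x := v)) f" for v
    by (rule Exists.IH) (use Exists.prems in auto)
  then show ?case by simp
qed

lemma tval_root_irrelevant: "\<not> troot t \<Longrightarrow> tval r a t = tval r' a t"
  by (cases t) auto

lemma sat_graph_fm_root_irrelevant: "graph_fm f \<Longrightarrow> sat V E r a f = sat V E r' a f"
proof (induction f arbitrary: a)
  case (Eq s t)
  then show ?case
    using tval_root_irrelevant[of s r a r'] tval_root_irrelevant[of t r a r'] by simp
next
  case (Adj s t)
  then show ?case
    using tval_root_irrelevant[of s r a r'] tval_root_irrelevant[of t r a r'] by simp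
qed auto

definition true_fm :: fm where
  "true_fm = Neg (Exists 0 (Neg (Eq (Var 0) (Var 0))))"

lemma sat_true_fm [simp]: "sat V E r a true_fm"
  and fv_true_fm [simp]: "fv true_fm = {}"
  and graph_fm_true_fm [simp]: "graph_fm true_fm"
  by (simp_all add: true_fm_def)

lemma def_tuples_sentence:
  assumes "fv f = {}"
  shows "def_tuples V E r f = (if sat V E r (\<lambda>_. undefined) f then {\<lambda>_. undefined} else {})"
proof -
  have "sat V E r a f = sat V E r (\<lambda>_. undefined) f" for a
    by (rule sat_cong) (simp add: assms)
  then show ?thesis
    using assms by (auto simp: def_tuples_def)
qed

fun rename_tm :: "(nat \<Rightarrow> nat) \<Rightarrow> gterm \<Rightarrow> gterm" where
  "rename_tm \<sigma> (Var i) = Var (\<sigma> i)"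
| "rename_tm \<sigma> Root = Root"

fun rename :: "(nat \<Rightarrow> nat) \<Rightarrow> fm \<Rightarrow> fm" where
  "rename \<sigma> (Eq s t) = Eq (rename_tm \<sigma> s) (rename_tm \<sigma> t)"
| "rename \<sigma> (Adj s t) = Adj (rename_tm \<sigma> s) (rename_tm \<sigma> t)"
| "rename \<sigma> (Neg f) = Neg (rename \<sigma> f)"
| "rename \<sigma> (Conj f g) = Conj (rename \<sigma> f) (rename \<sigma> g)"
| "rename \<sigma> (Exists x f) = Exists (\<sigma> x) (rename \<sigma> f)"

lemma tval_rename_tm: "tval r a (rename_tm \<sigma> t) = tval r (a \<circ> \<sigma>) t"
  by (cases t) auto

lemma tvars_rename_tm: "tvars (rename_tm \<sigma> t) = \<sigma> ` tvars t"
  by (cases t) auto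

lemma troot_rename_tm [simp]: "troot (rename_tm \<sigma> t) = troot t"
  by (cases t) auto

lemma sat_rename: "inj \<sigma> \<Longrightarrow> sat V E r a (rename \<sigma> f) = sat V E r (a \<circ> \<sigma>) f"
proof (induction f arbitrary: a)
  case (Exists x f)
  have upd: "a(\<sigma> x := v) \<circ> \<sigma> = (a \<circ> \<sigma>)(x := v)" for v
    using Exists.prems by (auto simp: fun_eq_iff dest: injD)
  show ?case
    by (simp only: sat.simps rename.simps Exists.IH[OF Exists.prems] upd)
qed (simp_all add: tval_rename_tm)

lemma fv_rename: "inj \<sigma> \<Longrightarrow> fv (rename \<sigma> f) = \<sigma> ` fv f"
  by (induction f) (auto simp: tvars_rename_tm image_Un image_set_diff)

lemma graph_fm_rename [simp]: "graph_fm (rename \<sigma> f) = graph_fm f"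
  by (induction f) auto

fun vars :: "fm \<Rightarrow> nat set" where
  "vars (Eq s t) = tvars s \<union> tvars t"
| "vars (Adj s t) = tvars s \<union> tvars t"
| "vars (Neg f) = vars f"
| "vars (Conj f g) = vars f \<union> vars g"
| "vars (Exists x f) = insert x (vars f)"

lemma fv_subset_vars: "fv f \<subseteq> vars f"
  by (induction f) auto

lemma ex_fresh_var: "\<exists>z. z \<notin> vars f"
proof -
  have "finite (vars f)"
    by (induction f) auto
  then show ?thesis
    using infinite_UNIV_nat ex_new_if_finite by blast
qed

definition fresh_var :: "fm \<Rightarrow> nat" where
  "fresh_var f = (SOME z. z \<notin> vars f)"

lemma fresh_var_notin_vars: "fresh_var f \<notin> vars f"
  unfolding fresh_var_def using ex_fresh_var by (rule someI_ex)

fun unroot_tm :: "nat \<Rightarrow> gterm \<Rightarrow> gterm" where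
  "unroot_tm z (Var i) = Var i"
| "unroot_tm z Root = Var z"

fun unroot :: "nat \<Rightarrow> fm \<Rightarrow> fm" where
  "unroot z (Eq s t) = Eq (unroot_tm z s) (unroot_tm z t)"
| "unroot z (Adj s t) = Adj (unroot_tm z s) (unroot_tm z t)"
| "unroot z (Neg f) = Neg (unroot z f)"
| "unroot z (Conj f g) = Conj (unroot z f) (unroot z g)"
| "unroot z (Exists x f) = Exists x (unroot z f)"

lemma tval_unroot_tm: "z \<notin> tvars t \<Longrightarrow> tval r' (a(z := r)) (unroot_tm z t) = tval r a t"
  by (cases t) auto

lemma sat_unroot: "z \<notin> vars f \<Longrightarrow> sat V E r' (a(z := r)) (unroot z f) = sat V E r a f"
proof (induction f arbitrary: a)
  case (Exists x f)
  then have "x \<noteq> z" "z \<notin> vars f"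
    by auto
  then have upd: "(a(z := r))(x := v) = (a(x := v))(z := r)" for v
    by (simp add: fun_upd_twist)
  show ?case
    by (simp only: sat.simps unroot.simps upd Exists.IH[OF \<open>z \<notin> vars f\<close>])
qed (simp_all add: tval_unroot_tm)

lemma fv_unroot_subset: "fv (unroot z f) \<subseteq> insert z (fv f)"
proof -
  have "tvars (unroot_tm z t) \<subseteq> insert z (tvars t)" for t
    by (cases t) auto
  then show ?thesis
    by (induction f) fastforce+
qed

lemma fv_subset_fv_unroot: "fv f \<subseteq> fv (unroot z f)"
proof -
  have "tvars t \<subseteq> tvars (unroot_tm z t)" for t
    by (cases t) auto
  then show ?thesis
    by (induction f) fastforce+
qed

lemma graph_fm_unroot [simp]: "graph_fm (unroot z f)"
proof -
  have "\<not> troot (unroot_tm z t)" for t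
    by (cases t) auto
  then show ?thesis
    by (induction f) auto
qed

section \<open>Stone pairings as measures\<close>

lemma stone_mod_eq_measure:
  "stone_mod M E r f = measure (PiM (fv f) (\<lambda>_. M)) (def_tuples (space M) E r f)"
  by (simp add: stone_mod_def def_tuples_sentence PiM_empty)

lemma stone_mod_true_fm [simp]: "stone_mod M E r true_fm = 1"
  by (simp add: stone_mod_def)

lemma PiM_uniform_count_measure:
  assumes I: "finite I" and V: "finite V" "V \<noteq> {}"
  shows "PiM I (\<lambda>_. uniform_count_measure V) = uniform_count_measure (PiE I (\<lambda>_. V))"
proof (rule measure_eqI_countable')
  interpret product_sigma_finite "\<lambda>_. uniform_count_measure V"
    by (simp add: product_sigma_finite_def prob_space_imp_sigma_finite
        prob_space_uniform_count_measure V)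
  show "space (PiM I (\<lambda>_. uniform_count_measure V)) = PiE I (\<lambda>_. V)"
    "space (uniform_count_measure (PiE I (\<lambda>_. V))) = PiE I (\<lambda>_. V)"
    by (simp_all add: space_PiM space_uniform_count_measure)
  show "countable (PiE I (\<lambda>_. V))"
    using I V by (simp add: countable_finite finite_PiE)
  fix f assume f: "f \<in> PiE I (\<lambda>_. V)"
  then have single: "{f} = PiE I (\<lambda>i. {f i})"
    by (intro PiE_singleton[symmetric]) (auto simp: PiE_def)
  show "{f} \<in> sets (PiM I (\<lambda>_. uniform_count_measure V))"
    unfolding single using f I by (intro sets_PiM_I_finite) (auto simp: sets_uniform_count_measure)
  show "{f} \<in> sets (uniform_count_measure (PiE I (\<lambda>_. V)))"
    using f by (simp add: sets_uniform_count_measure)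
  have "emeasure (PiM I (\<lambda>_. uniform_count_measure V)) {f}
      = (\<Prod>i\<in>I. emeasure (uniform_count_measure V) {f i})"
    unfolding single using f I by (intro emeasure_PiM) (auto simp: sets_uniform_count_measure)
  also have "\<dots> = (\<Prod>i\<in>I. ennreal (1 / card V))"
  proof (rule prod.cong)
    fix i assume "i \<in> I"
    then have "{f i} \<subseteq> V"
      using f by auto
    then show "emeasure (uniform_count_measure V) {f i} = ennreal (1 / card V)"
      using V by (simp add: emeasure_uniform_count_measure ennreal_of_nat_eq_real_of_nat
          divide_ennreal)
  qed simp
  also have "\<dots> = ennreal (1 / card (PiE I (\<lambda>_. V)))"
    using I V by (simp add: card_PiE ennreal_power power_one_over)
  also have "\<dots> = emeasure (uniform_count_measure (PiE I (\<lambda>_. V))) {f}"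
    using f I V by (simp add: emeasure_uniform_count_measure finite_PiE card_PiE
        ennreal_of_nat_eq_real_of_nat divide_ennreal)
  finally show "emeasure (PiM I (\<lambda>_. uniform_count_measure V)) {f}
      = emeasure (uniform_count_measure (PiE I (\<lambda>_. V))) {f}" .
qed

lemma stone_eq_stone_mod_uniform:
  assumes "finite V" "V \<noteq> {}"
  shows "stone V E r f = stone_mod (uniform_count_measure V) E r f"
proof (cases "fv f = {}")
  case True
  then show ?thesis
    by (simp add: stone_def stone_mod_def space_uniform_count_measure)
next
  case False
  have "def_tuples V E r f \<subseteq> PiE (fv f) (\<lambda>_. V)"
    by (auto simp: def_tuples_def)
  then show ?thesis
    using False assms by (simp add: stone_def stone_mod_def space_uniform_count_measure
        PiM_uniform_count_measure measure_uniform_count_measure finite_PiE card_PiE)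
qed

definition rooted_modeling :: "'v measure \<Rightarrow> ('v \<Rightarrow> 'v \<Rightarrow> bool) \<Rightarrow> bool" where
  "rooted_modeling M E \<longleftrightarrow> prob_space M \<and>
     (\<forall>r f. def_tuples (space M) E r f \<in> sets (PiM (fv f) (\<lambda>_. M)))"

lemma rooted_modeling_prob_space: "rooted_modeling M E \<Longrightarrow> prob_space M"
  and rooted_modeling_sets:
    "rooted_modeling M E \<Longrightarrow> def_tuples (space M) E r f \<in> sets (PiM (fv f) (\<lambda>_. M))"
  by (simp_all add: rooted_modeling_def)

lemma rooted_modeling_uniform_count_measure:
  assumes "finite V" "V \<noteq> {}"
  shows "rooted_modeling (uniform_count_measure V) E"
proof -
  have "def_tuples V E r f \<subseteq> PiE (fv f) (\<lambda>_. V)" for r f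
    by (auto simp: def_tuples_def)
  then show ?thesis
    using assms by (simp add: rooted_modeling_def prob_space_uniform_count_measure
        space_uniform_count_measure PiM_uniform_count_measure sets_uniform_count_measure)
qed

lemma modeling_imp_rooted_modeling:
  fixes M :: "'v::polish_space measure"
  assumes mod: "modeling M F"
  shows "rooted_modeling M F"
  unfolding rooted_modeling_def
proof (intro conjI allI)
  show "prob_space M"
    using mod by (simp add: modeling_def)
  have UNIV: "space M = UNIV"
    using mod unfolding modeling_def by (metis sets_eq_imp_space_eq space_borel)
  fix b \<psi>
  obtain z where z: "z \<notin> vars \<psi>"
    using ex_fresh_var by blast
  define \<psi>' where "\<psi>' = unroot z \<psi>"
  define g where "g a = restrict (a(z := b)) (fv \<psi>')" for a :: "nat \<Rightarrow> 'v"
  have g: "g \<in> PiM (fv \<psi>) (\<lambda>_. M) \<rightarrow>\<^sub>M PiM (fv \<psi>') (\<lambda>_. M)"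
    unfolding g_def
  proof (rule measurable_restrict)
    fix i assume "i \<in> fv \<psi>'"
    then have "i = z \<or> i \<in> fv \<psi>"
      using fv_unroot_subset \<psi>'_def by auto
    then show "(\<lambda>a. (a(z := b)) i) \<in> PiM (fv \<psi>) (\<lambda>_. M) \<rightarrow>\<^sub>M M"
      using UNIV by auto
  qed
  have "sat (space M) F undefined (g a) \<psi>' = sat (space M) F b a \<psi>" for a
  proof -
    have "sat (space M) F undefined (g a) \<psi>' = sat (space M) F undefined (a(z := b)) \<psi>'"
      by (rule sat_cong) (simp add: g_def)
    also have "\<dots> = sat (space M) F b a \<psi>"
      unfolding \<psi>'_def by (rule sat_unroot[OF z])
    finally show ?thesis .
  qed
  then have "def_tuples (space M) F b \<psi> =
      g -` def_tuples (space M) F undefined \<psi>' \<inter> space (PiM (fv \<psi>) (\<lambda>_. M))"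
    by (auto simp: def_tuples_def space_PiM UNIV g_def)
  moreover have "def_tuples (space M) F undefined \<psi>' \<in> sets (PiM (fv \<psi>') (\<lambda>_. M))"
    using mod by (simp add: modeling_def \<psi>'_def)
  ultimately show "def_tuples (space M) F b \<psi> \<in> sets (PiM (fv \<psi>) (\<lambda>_. M))"
    using g by (simp add: measurable_sets)
qed

section \<open>Conjunctions of formulas with disjoint free variables\<close>

lemma stone_mod_rename:
  fixes M :: "'v measure"
  assumes M: "rooted_modeling M F" and \<sigma>: "inj \<sigma>"
  shows "stone_mod M F b (rename \<sigma> A) = stone_mod M F b A"
proof -
  define h where "h = (\<lambda>(a :: nat \<Rightarrow> 'v). \<lambda>i\<in>fv A. a (\<sigma> i))"
  have distr: "distr (PiM (\<sigma> ` fv A) (\<lambda>_. M)) (PiM (fv A) (\<lambda>_. M)) h = PiM (fv A) (\<lambda>_. M)"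
    using distr_PiM_reindex[of "\<sigma> ` fv A" "\<lambda>_. M" \<sigma> "fv A"] rooted_modeling_prob_space[OF M]
      inj_on_subset[OF \<sigma>]
    by (simp add: h_def)
  have h: "h \<in> PiM (\<sigma> ` fv A) (\<lambda>_. M) \<rightarrow>\<^sub>M PiM (fv A) (\<lambda>_. M)"
    unfolding h_def by (rule measurable_restrict) simp
  have "sat (space M) F b (h a) A = sat (space M) F b a (rename \<sigma> A)" for a
    unfolding sat_rename[OF \<sigma>] by (rule sat_cong) (simp add: h_def)
  then have "h -` def_tuples (space M) F b A \<inter> space (PiM (\<sigma> ` fv A) (\<lambda>_. M))
      = def_tuples (space M) F b (rename \<sigma> A)"
    by (auto simp: def_tuples_def space_PiM fv_rename[OF \<sigma>] h_def)
  then show ?thesis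
    using measure_distr[OF h rooted_modeling_sets[OF M, of b A]]
    by (simp add: stone_mod_eq_measure distr fv_rename[OF \<sigma>])
qed

lemma measure_PiM_merge_Times:
  assumes M: "prob_space M" and IJ: "I \<inter> J = {}" "finite I" "finite J"
    and X: "X \<in> sets (PiM (I \<union> J) (\<lambda>_. M))"
    and A: "A \<in> sets (PiM I (\<lambda>_. M))" and B: "B \<in> sets (PiM J (\<lambda>_. M))"
    and X_eq: "merge I J -` X \<inter> space (PiM I (\<lambda>_. M) \<Otimes>\<^sub>M PiM J (\<lambda>_. M)) = A \<times> B"
  shows "measure (PiM (I \<union> J) (\<lambda>_. M)) X
    = measure (PiM I (\<lambda>_. M)) A * measure (PiM J (\<lambda>_. M)) B"
proof -
  interpret product_sigma_finite "\<lambda>_. M"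
    using M by (simp add: product_sigma_finite_def prob_space_imp_sigma_finite)
  interpret J: prob_space "PiM J (\<lambda>_. M)"
    using M by (simp add: prob_space_PiM)
  have "measure (PiM (I \<union> J) (\<lambda>_. M)) X
      = measure (distr (PiM I (\<lambda>_. M) \<Otimes>\<^sub>M PiM J (\<lambda>_. M)) (PiM (I \<union> J) (\<lambda>_. M)) (merge I J)) X"
    using distr_merge[OF IJ] by simp
  also have "\<dots> = measure (PiM I (\<lambda>_. M) \<Otimes>\<^sub>M PiM J (\<lambda>_. M)) (A \<times> B)"
    by (simp add: measure_distr[OF measurable_merge X] X_eq)
  also have "\<dots> = measure (PiM I (\<lambda>_. M)) A * measure (PiM J (\<lambda>_. M)) B"
    using J.emeasure_pair_measure_Times[OF A B] by (simp add: measure_def enn2real_mult)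
  finally show ?thesis .
qed

definition conj_apart :: "fm \<Rightarrow> fm \<Rightarrow> fm" where
  "conj_apart A B = Conj (rename (\<lambda>i. 2 * i) A) (rename (\<lambda>i. 2 * i + 1) B)"

lemma stone_mod_conj_apart:
  assumes M: "rooted_modeling M F"
  shows "stone_mod M F b (conj_apart A B) = stone_mod M F b A * stone_mod M F b B"
proof -
  define A' where "A' = rename (\<lambda>i. 2 * i) A"
  define B' where "B' = rename (\<lambda>i. 2 * i + 1) B"
  have "inj (\<lambda>i::nat. 2 * i)" "inj (\<lambda>i::nat. 2 * i + 1)"
    by (auto intro: injI)
  then have fv: "fv A' = (\<lambda>i. 2 * i) ` fv A" "fv B' = (\<lambda>i. 2 * i + 1) ` fv B"
    and stone: "stone_mod M F b A' = stone_mod M F b A" "stone_mod M F b B' = stone_mod M F b B"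
    by (simp_all add: A'_def B'_def fv_rename stone_mod_rename[OF M])
  have disj: "fv A' \<inter> fv B' = {}"
    unfolding fv by auto presburger
  have conj: "conj_apart A B = Conj A' B'"
    by (simp add: conj_apart_def A'_def B'_def)
  have "sat (space M) F b (merge (fv A') (fv B') (x, y)) A' = sat (space M) F b x A'"
    "sat (space M) F b (merge (fv A') (fv B') (x, y)) B' = sat (space M) F b y B'" for x y
    using disj by (auto simp: merge_def intro!: sat_cong)
  then have pre: "merge (fv A') (fv B') -` def_tuples (space M) F b (Conj A' B')
        \<inter> space (PiM (fv A') (\<lambda>_. M) \<Otimes>\<^sub>M PiM (fv B') (\<lambda>_. M))
      = def_tuples (space M) F b A' \<times> def_tuples (space M) F b B'"
    using disj by (auto simp: def_tuples_def space_pair_measure space_PiM merge_def)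
  have "stone_mod M F b (Conj A' B') = stone_mod M F b A' * stone_mod M F b B'"
    unfolding stone_mod_eq_measure fv.simps
    by (rule measure_PiM_merge_Times[OF _ _ _ _ _ _ _ pre])
      (use disj rooted_modeling_sets[OF M, of b "Conj A' B'"] in
        \<open>simp_all add: rooted_modeling_prob_space[OF M] rooted_modeling_sets[OF M]\<close>)
  then show ?thesis
    by (simp add: conj stone)
qed

fun conj_list :: "fm list \<Rightarrow> fm" where
  "conj_list [] = true_fm"
| "conj_list (f # fs) = conj_apart f (conj_list fs)"

lemma stone_mod_conj_list:
  "rooted_modeling M F \<Longrightarrow> stone_mod M F b (conj_list fs) = (\<Prod>f\<leftarrow>fs. stone_mod M F b f)"
  by (induction fs) (simp_all add: stone_mod_conj_apart)

lemma stone_conj_list: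
  "finite V \<Longrightarrow> V \<noteq> {} \<Longrightarrow> stone V E r (conj_list fs) = (\<Prod>f\<leftarrow>fs. stone V E r f)"
  by (simp add: stone_eq_stone_mod_uniform stone_mod_conj_list
      rooted_modeling_uniform_count_measure)

section \<open>Counting roots by graph formulas\<close>

fun distinct_from :: "nat \<Rightarrow> nat list \<Rightarrow> fm" where
  "distinct_from x [] = true_fm"
| "distinct_from x (u # us) = Conj (Neg (Eq (Var x) (Var u))) (distinct_from x us)"

lemma sat_distinct_from: "sat V E r a (distinct_from x us) \<longleftrightarrow> a x \<notin> a ` set us"
  by (induction us) auto

lemma fv_distinct_from: "fv (distinct_from x us) = (if us = [] then {} else insert x (set us))"
  by (induction us) auto

lemma graph_fm_distinct_from [simp]: "graph_fm (distinct_from x us)"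
  by (induction us) auto

text \<open>
  \<open>at_least P z N t us\<close> binds the \<open>t\<close> witnesses to the variables \<open>N + t, \<dots>, N + 1\<close>, which
  must not occur in \<open>P\<close>; the list \<open>us\<close> collects the witness variables already bound.
\<close>

fun at_least :: "fm \<Rightarrow> nat \<Rightarrow> nat \<Rightarrow> nat \<Rightarrow> nat list \<Rightarrow> fm" where
  "at_least P z N 0 us = true_fm"
| "at_least P z N (Suc t) us =
     Exists (N + Suc t) (Conj (rename (Transposition.transpose z (N + Suc t)) P)
       (Conj (distinct_from (N + Suc t) us) (at_least P z N t ((N + Suc t) # us))))"

lemma at_least_Suc_eq:
  "x = N + Suc t \<Longrightarrow> at_least P z N (Suc t) us =
     Exists x (Conj (rename (Transposition.transpose z x) P)
       (Conj (distinct_from x us) (at_least P z N t (x # us))))"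
  by simp

lemma graph_fm_at_least: "graph_fm P \<Longrightarrow> graph_fm (at_least P z N t us)"
  by (induction t arbitrary: us) auto

lemma Suc_le_card_iff_ex_Diff:
  assumes "finite T"
  shows "Suc t \<le> card T \<longleftrightarrow> (\<exists>w\<in>T. t \<le> card (T - {w}))"
proof
  assume "Suc t \<le> card T"
  then obtain w where "w \<in> T"
    by fastforce
  with \<open>Suc t \<le> card T\<close> show "\<exists>w\<in>T. t \<le> card (T - {w})"
    using assms by (auto simp: card_Diff_singleton)
next
  assume "\<exists>w\<in>T. t \<le> card (T - {w})"
  then show "Suc t \<le> card T"
    using assms card_Diff1_less[of T] by fastforce
qed

lemma sat_at_least:
  assumes bound: "insert z (fv P) \<subseteq> {..N}" and us: "set us \<subseteq> {N + t<..}"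
    and fin: "\<And>a. finite {v\<in>V. sat V E r (a(z := v)) P}"
  shows "sat V E r a (at_least P z N t us) \<longleftrightarrow>
    t \<le> card ({v\<in>V. sat V E r (a(z := v)) P} - a ` set us)"
  using us
proof (induction t arbitrary: a us)
  case 0
  then show ?case by simp
next
  case (Suc t)
  define x where "x = N + Suc t"
  define T where "T = {v\<in>V. sat V E r (a(z := v)) P}"
  have x: "x \<noteq> z" "x \<notin> fv P" "x \<notin> set us"
    using bound Suc.prems by (auto simp: x_def)
  have P: "sat V E r (a(x := w)) (rename (Transposition.transpose z x) P) \<longleftrightarrow>
      sat V E r (a(z := w)) P" for w
    unfolding sat_rename[OF inj_transpose] using x
    by (intro sat_cong) (auto simp: Transposition.transpose_def)
  have "sat V E r ((a(x := w))(z := v)) P \<longleftrightarrow> sat V E r (a(z := v)) P" for w v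
    using x by (intro sat_cong) auto
  then have T: "{v\<in>V. sat V E r ((a(x := w))(z := v)) P} = T" for w
    by (simp add: T_def)
  have IH: "sat V E r (a(x := w)) (at_least P z N t (x # us)) \<longleftrightarrow>
      t \<le> card (T - a ` set us - {w})" for w
  proof -
    have "set (x # us) \<subseteq> {N + t<..}"
      using Suc.prems by (auto simp: x_def)
    then have "sat V E r (a(x := w)) (at_least P z N t (x # us)) \<longleftrightarrow>
        t \<le> card ({v\<in>V. sat V E r ((a(x := w))(z := v)) P} - (a(x := w)) ` set (x # us))"
      by (rule Suc.IH[of "x # us" "a(x := w)"])
    moreover have "(a(x := w)) ` set (x # us) = insert w (a ` set us)"
      using x by auto
    moreover have "T - insert w (a ` set us) = T - a ` set us - {w}"
      by blast
    ultimately show ?thesis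
      by (simp only: T)
  qed
  have "sat V E r a (at_least P z N (Suc t) us) \<longleftrightarrow>
      (\<exists>w\<in>V. sat V E r (a(z := w)) P \<and> w \<notin> a ` set us \<and> t \<le> card (T - a ` set us - {w}))"
    unfolding at_least_Suc_eq[OF x_def] using x by (auto simp: P IH sat_distinct_from)
  also have "\<dots> \<longleftrightarrow> (\<exists>w\<in>T - a ` set us. t \<le> card (T - a ` set us - {w}))"
    by (auto simp: T_def)
  also have "\<dots> \<longleftrightarrow> Suc t \<le> card (T - a ` set us)"
    by (rule Suc_le_card_iff_ex_Diff[symmetric]) (simp add: T_def fin)
  finally show ?case
    unfolding T_def .
qed

lemma fv_at_least:
  assumes "z \<in> fv P" "fv P \<subseteq> {..N}" "set us \<subseteq> {N + t<..}"
  shows "fv (at_least P z N t us) = (if t = 0 then {} else fv P - {z} \<union> set us)"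
  using assms(3)
proof (induction t arbitrary: us)
  case 0
  then show ?case by simp
next
  case (Suc t)
  define x where "x = N + Suc t"
  have x: "x \<noteq> z" "x \<notin> fv P" "x \<notin> set us"
    using assms(1,2) Suc.prems by (auto simp: x_def)
  have "fv (rename (Transposition.transpose z x) P) = insert x (fv P - {z})"
    using assms(1) x by (auto simp: fv_rename[OF inj_transpose] Transposition.transpose_def)
  moreover have "fv (at_least P z N t (x # us))
      = (if t = 0 then {} else fv P - {z} \<union> set (x # us))"
    by (rule Suc.IH) (use Suc.prems in \<open>auto simp: x_def\<close>)
  ultimately show ?case
    unfolding at_least_Suc_eq[OF x_def] using x by (auto simp: fv_distinct_from)
qed

definition root_fm :: "fm \<Rightarrow> nat \<Rightarrow> fm \<Rightarrow> nat \<Rightarrow> fm" where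
  "root_fm xi x0 \<psi> z = Conj (rename (Transposition.transpose x0 z) xi) (unroot z \<psi>)"

lemma fv_root_fm: "fv xi = {x0} \<Longrightarrow> fv (root_fm xi x0 \<psi> z) = insert z (fv \<psi>)"
  using fv_unroot_subset[of z \<psi>] fv_subset_fv_unroot[of \<psi> z]
  by (auto simp: root_fm_def fv_rename)

lemma sat_root_fm:
  assumes xi: "fv xi = {x0}" "graph_fm xi" and z: "z \<notin> vars \<psi>"
  shows "sat V E r (a(z := v)) (root_fm xi x0 \<psi> z) \<longleftrightarrow>
    sat V E undefined (\<lambda>_. v) xi \<and> sat V E v a \<psi>"
proof -
  have "sat V E r (a(z := v)) (rename (Transposition.transpose x0 z) xi) \<longleftrightarrow>
      sat V E r (\<lambda>_. v) xi"
    unfolding sat_rename[OF inj_transpose] by (rule sat_cong) (simp add: xi)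
  also have "\<dots> \<longleftrightarrow> sat V E undefined (\<lambda>_. v) xi"
    by (rule sat_graph_fm_root_irrelevant[OF xi(2)])
  moreover have "sat V E r (a(z := v)) (unroot z \<psi>) \<longleftrightarrow> sat V E v a \<psi>"
    by (rule sat_unroot[OF z])
  ultimately show ?thesis
    by (simp add: root_fm_def)
qed

definition roots_at_least :: "fm \<Rightarrow> nat \<Rightarrow> fm \<Rightarrow> nat \<Rightarrow> fm" where
  "roots_at_least xi x0 \<psi> t =
     at_least (root_fm xi x0 \<psi> (fresh_var \<psi>)) (fresh_var \<psi>)
       (Max (insert (fresh_var \<psi>) (fv \<psi>))) t []"

lemma graph_fm_roots_at_least: "graph_fm xi \<Longrightarrow> graph_fm (roots_at_least xi x0 \<psi> t)"
  by (simp add: roots_at_least_def root_fm_def graph_fm_at_least)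

lemma sat_roots_at_least:
  assumes xi: "fv xi = {x0}" "graph_fm xi" and fin: "finite (def_set V E xi)"
  shows "sat V E r a (roots_at_least xi x0 \<psi> t) \<longleftrightarrow> t \<le> card {v\<in>def_set V E xi. sat V E v a \<psi>}"
proof -
  have roots: "{v\<in>V. sat V E r (a(fresh_var \<psi> := v)) (root_fm xi x0 \<psi> (fresh_var \<psi>))}
      = {v\<in>def_set V E xi. sat V E v a \<psi>}" for a
    by (auto simp: sat_root_fm[OF xi fresh_var_notin_vars] def_set_def)
  have "insert (fresh_var \<psi>) (fv (root_fm xi x0 \<psi> (fresh_var \<psi>)))
      \<subseteq> {..Max (insert (fresh_var \<psi>) (fv \<psi>))}"
    by (auto simp: fv_root_fm[OF xi(1)])
  then show ?thesis
    unfolding roots_at_least_def using fin by (subst sat_at_least) (simp_all add: roots)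
qed

lemma fv_roots_at_least:
  assumes "fv xi = {x0}" "t \<noteq> 0"
  shows "fv (roots_at_least xi x0 \<psi> t) = fv \<psi>"
proof -
  have "fresh_var \<psi> \<notin> fv \<psi>"
    using fresh_var_notin_vars fv_subset_vars by blast
  then show ?thesis
    unfolding roots_at_least_def using assms
    by (subst fv_at_least) (auto simp: fv_root_fm)
qed

lemma sum_measure_eq_integral_sum_indicator:
  assumes M: "finite_measure M" and A: "\<And>i. i \<in> I \<Longrightarrow> A i \<in> sets M"
  shows "(\<Sum>i\<in>I. measure M (A i)) = (\<integral>x. (\<Sum>i\<in>I. indicator (A i) x) \<partial>M)"
proof -
  have "integrable M (indicator (A i) :: 'a \<Rightarrow> real)" if "i \<in> I" for i
    using A[OF that] M
    by (intro integrable_real_indicator)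
      (simp_all add: finite_measure.emeasure_finite less_top[symmetric])
  then show ?thesis
    using A by (simp add: Int_absorb2 sets.sets_into_space)
qed

lemma sum_measure_eq_if_sum_indicator_eq:
  assumes M: "finite_measure M"
    and A: "\<And>i. i \<in> I \<Longrightarrow> A i \<in> sets M" and B: "\<And>j. j \<in> J \<Longrightarrow> B j \<in> sets M"
    and eq: "\<And>x. x \<in> space M \<Longrightarrow> (\<Sum>i\<in>I. indicator (A i) x) = (\<Sum>j\<in>J. indicator (B j) x :: real)"
  shows "(\<Sum>i\<in>I. measure M (A i)) = (\<Sum>j\<in>J. measure M (B j))"
proof -
  have "(\<Sum>i\<in>I. measure M (A i)) = (\<integral>x. (\<Sum>i\<in>I. indicator (A i) x) \<partial>M)"
    by (rule sum_measure_eq_integral_sum_indicator[OF M A])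
  also have "\<dots> = (\<integral>x. (\<Sum>j\<in>J. indicator (B j) x) \<partial>M)"
    by (rule Bochner_Integration.integral_cong) (simp_all add: eq)
  also have "\<dots> = (\<Sum>j\<in>J. measure M (B j))"
    by (rule sum_measure_eq_integral_sum_indicator[OF M B, symmetric])
  finally show ?thesis .
qed

lemma sum_of_bool_le: "c \<le> k \<Longrightarrow> (\<Sum>t=1..k. of_bool (t \<le> c)) = (of_nat c :: 'a::semiring_1)"
proof -
  assume "c \<le> k"
  then have "{1..k} \<inter> {t. t \<le> c} = {1..c}"
    by auto
  then have "card ({1..k} \<inter> {t. t \<le> c}) = c"
    by simp
  then show ?thesis
    using sum_of_bool_eq[of "{1..k}" "\<lambda>t. t \<le> c", where 'a='a] by simp
qed

lemma sum_stone_mod_roots: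
  assumes M: "rooted_modeling M E" and xi: "fv xi = {x0}" "graph_fm xi"
    and fin: "finite (def_set (space M) E xi)" and k: "card (def_set (space M) E xi) \<le> k"
  shows "(\<Sum>r\<in>def_set (space M) E xi. stone_mod M E r \<psi>)
       = (\<Sum>t=1..k. stone_mod M E undefined (roots_at_least xi x0 \<psi> t))"
proof -
  define X where "X = def_set (space M) E xi"
  define c where "c a = card {r\<in>X. sat (space M) E r a \<psi>}" for a
  interpret P: prob_space "PiM (fv \<psi>) (\<lambda>_. M)"
    using rooted_modeling_prob_space[OF M] by (simp add: prob_space_PiM)
  have c_le: "c a \<le> k" for a
    using card_mono[OF fin, of "{r\<in>X. sat (space M) E r a \<psi>}"] k by (auto simp: c_def X_def)
  have roots: "def_tuples (space M) E undefined (roots_at_least xi x0 \<psi> t)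
      = {a\<in>fv \<psi> \<rightarrow>\<^sub>E space M. t \<le> c a}" if "t \<in> {1..k}" for t
    using that by (auto simp: def_tuples_def fv_roots_at_least[OF xi(1)]
        sat_roots_at_least[OF xi fin] c_def X_def)
  have pointwise: "(\<Sum>t=1..k. indicator {a\<in>fv \<psi> \<rightarrow>\<^sub>E space M. t \<le> c a} a)
      = (\<Sum>r\<in>X. indicator (def_tuples (space M) E r \<psi>) a :: real)"
    if "a \<in> space (PiM (fv \<psi>) (\<lambda>_. M))" for a
  proof -
    have "(\<Sum>t=1..k. indicator {a\<in>fv \<psi> \<rightarrow>\<^sub>E space M. t \<le> c a} a)
        = (\<Sum>t=1..k. of_bool (t \<le> c a) :: real)"
      using that by (simp add: indicator_def space_PiM)
    also have "\<dots> = c a"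
      by (rule sum_of_bool_le[OF c_le])
    also have "\<dots> = (\<Sum>r\<in>X. of_bool (sat (space M) E r a \<psi>))"
      using fin by (simp add: c_def X_def Int_def)
    also have "\<dots> = (\<Sum>r\<in>X. indicator (def_tuples (space M) E r \<psi>) a)"
      using that by (simp add: indicator_def def_tuples_def space_PiM)
    finally show ?thesis .
  qed
  have "(\<Sum>t=1..k. measure (PiM (fv \<psi>) (\<lambda>_. M)) {a\<in>fv \<psi> \<rightarrow>\<^sub>E space M. t \<le> c a})
      = (\<Sum>r\<in>X. measure (PiM (fv \<psi>) (\<lambda>_. M)) (def_tuples (space M) E r \<psi>))"
  proof (rule sum_measure_eq_if_sum_indicator_eq)
    fix t assume "t \<in> {1..k}"
    then show "{a\<in>fv \<psi> \<rightarrow>\<^sub>E space M. t \<le> c a} \<in> sets (PiM (fv \<psi>) (\<lambda>_. M))"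
      using rooted_modeling_sets[OF M, of undefined "roots_at_least xi x0 \<psi> t"]
      by (simp add: roots fv_roots_at_least[OF xi(1)])
  qed (rule P.finite_measure_axioms, rule rooted_modeling_sets[OF M], rule pointwise)
  then show ?thesis
    by (simp add: stone_mod_eq_measure roots fv_roots_at_least[OF xi(1)] X_def)
qed

section \<open>Convergence of root sums\<close>

lemma tendsto_sum_stone_roots:
  fixes V :: "nat \<Rightarrow> 'a set" and M :: "'v::polish_space measure"
  assumes V: "\<And>n. finite (V n)" "\<And>n. V n \<noteq> {}" and lim: "modeling_limit V E M F"
    and xi: "fv xi = {x0}" "graph_fm xi" and fin: "finite (def_set (space M) F xi)"
    and card: "\<And>n. card (def_set (V n) (E n) xi) = card (def_set (space M) F xi)"
  shows "(\<lambda>n. \<Sum>r\<in>def_set (V n) (E n) xi. stone (V n) (E n) r \<psi>)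
    \<longlonglongrightarrow> (\<Sum>r\<in>def_set (space M) F xi. stone_mod M F r \<psi>)"
proof -
  define k where "k = card (def_set (space M) F xi)"
  have "(\<Sum>r\<in>def_set (V n) (E n) xi. stone (V n) (E n) r \<psi>)
      = (\<Sum>t=1..k. stone (V n) (E n) undefined (roots_at_least xi x0 \<psi> t))" for n
  proof -
    have "finite (def_set (V n) (E n) xi)"
      using V by (simp add: def_set_def)
    then show ?thesis
      using sum_stone_mod_roots[OF rooted_modeling_uniform_count_measure[OF V] xi,
          where k = k and \<psi> = \<psi>] card
      by (simp add: stone_eq_stone_mod_uniform[OF V] space_uniform_count_measure k_def)
  qed
  moreover have "(\<Sum>r\<in>def_set (space M) F xi. stone_mod M F r \<psi>)
      = (\<Sum>t=1..k. stone_mod M F undefined (roots_at_least xi x0 \<psi> t))"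
    using lim by (intro sum_stone_mod_roots[OF modeling_imp_rooted_modeling xi fin])
      (simp_all add: modeling_limit_def k_def)
  moreover have "(\<lambda>n. \<Sum>t=1..k. stone (V n) (E n) undefined (roots_at_least xi x0 \<psi> t))
      \<longlonglongrightarrow> (\<Sum>t=1..k. stone_mod M F undefined (roots_at_least xi x0 \<psi> t))"
    using lim graph_fm_roots_at_least[OF xi(2)]
    by (intro tendsto_sum) (simp add: modeling_limit_def)
  ultimately show ?thesis
    by simp
qed

inductive poly_fun :: "((nat \<Rightarrow> real) \<Rightarrow> real) \<Rightarrow> bool" where
  const: "poly_fun (\<lambda>w. c)"
| coord: "poly_fun (\<lambda>w. w j)"
| add: "poly_fun p \<Longrightarrow> poly_fun q \<Longrightarrow> poly_fun (\<lambda>w. p w + q w)"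
| mult: "poly_fun p \<Longrightarrow> poly_fun q \<Longrightarrow> poly_fun (\<lambda>w. p w * q w)"

lemma poly_fun_diff: "poly_fun p \<Longrightarrow> poly_fun q \<Longrightarrow> poly_fun (\<lambda>w. p w - q w)"
  using poly_fun.add[OF _ poly_fun.mult[OF poly_fun.const[of "-1"]]] by simp

lemma poly_fun_sum: "(\<And>i. i \<in> I \<Longrightarrow> poly_fun (p i)) \<Longrightarrow> poly_fun (\<lambda>w. \<Sum>i\<in>I. p i w)"
  by (induction I rule: infinite_finite_induct) (auto intro: poly_fun.intros)

lemma poly_fun_prod: "(\<And>i. i \<in> I \<Longrightarrow> poly_fun (p i)) \<Longrightarrow> poly_fun (\<lambda>w. \<Prod>i\<in>I. p i w)"
  by (induction I rule: infinite_finite_induct) (auto intro: poly_fun.intros)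

lemma sum_list_mult_sum_list:
  "(\<Sum>x\<leftarrow>xs. f x) * (\<Sum>y\<leftarrow>ys. g y)
    = (\<Sum>(x, y)\<leftarrow>List.product xs ys. f x * g y :: 'a::comm_semiring_0)"
  by (induction xs) (simp_all add: distrib_right sum_list_const_mult comp_def)

lemma poly_fun_monomial_expansion:
  "poly_fun p \<Longrightarrow> \<exists>cs. \<forall>w. p w = (\<Sum>(c, js)\<leftarrow>cs. c * (\<Prod>j\<leftarrow>js. w j))"
proof (induction rule: poly_fun.induct)
  case (const c)
  show ?case
    by (rule exI[of _ "[(c, [])]"]) simp
next
  case (coord j)
  show ?case
    by (rule exI[of _ "[(1, [j])]"]) simp
next
  case (add p q)
  then obtain cs ds where "\<forall>w. p w = (\<Sum>(c, js)\<leftarrow>cs. c * (\<Prod>j\<leftarrow>js. w j))"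
    "\<forall>w. q w = (\<Sum>(c, js)\<leftarrow>ds. c * (\<Prod>j\<leftarrow>js. w j))"
    by blast
  then show ?case
    by (intro exI[of _ "cs @ ds"]) simp
next
  case (mult p q)
  then obtain cs ds where "\<forall>w. p w = (\<Sum>(c, js)\<leftarrow>cs. c * (\<Prod>j\<leftarrow>js. w j))"
    "\<forall>w. q w = (\<Sum>(c, js)\<leftarrow>ds. c * (\<Prod>j\<leftarrow>js. w j))"
    by blast
  then show ?case
    by (intro exI[of _ "map (\<lambda>((c, js), (d, ks)). (c * d, js @ ks)) (List.product cs ds)"])
      (simp add: sum_list_mult_sum_list split_def comp_def mult_ac)
qed

lemma tendsto_sum_poly_stone_roots:
  fixes V :: "nat \<Rightarrow> 'a set" and M :: "'v::polish_space measure"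
  assumes V: "\<And>n. finite (V n)" "\<And>n. V n \<noteq> {}" and lim: "modeling_limit V E M F"
    and xi: "fv xi = {x0}" "graph_fm xi" and fin: "finite (def_set (space M) F xi)"
    and card: "\<And>n. card (def_set (V n) (E n) xi) = card (def_set (space M) F xi)"
    and p: "poly_fun p"
  shows "(\<lambda>n. \<Sum>r\<in>def_set (V n) (E n) xi. p (\<lambda>j. stone (V n) (E n) r (\<phi> j)))
    \<longlonglongrightarrow> (\<Sum>r\<in>def_set (space M) F xi. p (\<lambda>j. stone_mod M F r (\<phi> j)))"
proof -
  obtain cs where cs: "\<And>w. p w = (\<Sum>(c, js)\<leftarrow>cs. c * (\<Prod>j\<leftarrow>js. w j))"
    using poly_fun_monomial_expansion[OF p] by blast
  have M: "rooted_modeling M F"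
    using lim by (simp add: modeling_limit_def modeling_imp_rooted_modeling)
  have monomial: "(\<lambda>n. \<Sum>r\<in>def_set (V n) (E n) xi. \<Prod>j\<leftarrow>js. stone (V n) (E n) r (\<phi> j))
      \<longlonglongrightarrow> (\<Sum>r\<in>def_set (space M) F xi. \<Prod>j\<leftarrow>js. stone_mod M F r (\<phi> j))" for js
    using tendsto_sum_stone_roots[OF V lim xi fin card, of "conj_list (map \<phi> js)"]
    by (simp add: stone_conj_list[OF V] stone_mod_conj_list[OF M] comp_def)
  have "(\<lambda>n. \<Sum>r\<in>def_set (V n) (E n) xi. \<Sum>(c, js)\<leftarrow>cs. c * (\<Prod>j\<leftarrow>js. stone (V n) (E n) r (\<phi> j)))
      \<longlonglongrightarrow> (\<Sum>r\<in>def_set (space M) F xi. \<Sum>(c, js)\<leftarrow>cs. c * (\<Prod>j\<leftarrow>js. stone_mod M F r (\<phi> j)))"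
  proof (induction cs)
    case (Cons cjs cs)
    then show ?case
      by (cases cjs)
        (simp add: sum.distrib sum_distrib_left[symmetric] tendsto_add tendsto_mult_left monomial)
  qed simp
  then show ?thesis
    by (simp add: cs)
qed

section \<open>Approximating the roots of the limit\<close>

lemma ex_poly_fun_peak:
  fixes U :: "'b \<Rightarrow> nat \<Rightarrow> real"
  assumes T: "finite T" "a \<in> T" and e: "0 < e"
  shows "\<exists>p. poly_fun p \<and> (\<forall>b\<in>T. 0 \<le> p (U b)) \<and> 0 < p (U a) \<and>
    (\<forall>w. 0 < p w \<longrightarrow> (\<Sum>j\<le>i. (w j - U a j)\<^sup>2) < e)"
proof -
  define D where "D u w = (\<Sum>j\<le>i. (w j - u j)\<^sup>2)" for u w :: "nat \<Rightarrow> real"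
  have D_nonneg: "0 \<le> D u w" for u w
    by (simp add: D_def sum_nonneg)
  have D_eq_0: "D u w = 0 \<longleftrightarrow> (\<forall>j\<le>i. w j = u j)" for u w
    by (auto simp: D_def sum_nonneg_eq_0_iff)
  define B where "B = {b\<in>T. D (U b) (U a) \<noteq> 0}"
  define p where "p w = (\<Prod>b\<in>B. D (U b) w) * (e - D (U a) w)" for w
  have "poly_fun (D u)" for u
    unfolding D_def power2_eq_square
    by (intro poly_fun_sum poly_fun.mult poly_fun_diff poly_fun.intros)
  then have "poly_fun p"
    unfolding p_def[abs_def] by (intro poly_fun.mult poly_fun_prod poly_fun_diff poly_fun.const)
  moreover have prod_nonneg: "0 \<le> (\<Prod>b\<in>B. D (U b) w)" for w
    by (simp add: prod_nonneg D_nonneg)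
  have "0 \<le> p (U b)" if "b \<in> T" for b
  proof (cases "b \<in> B")
    case True
    then have "(\<Prod>b'\<in>B. D (U b') (U b)) = 0"
      using T(1) by (auto simp: B_def D_eq_0 intro!: prod_zero)
    then show ?thesis
      by (simp add: p_def)
  next
    case False
    then have "D (U a) (U b) = 0"
      using that by (auto simp: B_def D_eq_0)
    then show ?thesis
      using prod_nonneg e by (simp add: p_def)
  qed
  moreover have "0 < p (U a)"
  proof -
    have "0 < (\<Prod>b\<in>B. D (U b) (U a))"
      using D_nonneg by (intro prod_pos) (auto simp: B_def order_le_neq_trans)
    moreover have "D (U a) (U a) = 0"
      by (simp add: D_eq_0)
    ultimately show ?thesis
      using e by (simp add: p_def)
  qed
  moreover have "D (U a) w < e" if "0 < p w" for w
    using that mult_nonneg_nonpos[OF prod_nonneg[of w], of "e - D (U a) w"] by (force simp: p_def)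
  ultimately show ?thesis
    unfolding D_def by blast
qed

lemma eventually_ex_close_to_root:
  fixes S :: "nat \<Rightarrow> 'a set" and W :: "nat \<Rightarrow> 'a \<Rightarrow> nat \<Rightarrow> real"
    and T :: "'b set" and U :: "'b \<Rightarrow> nat \<Rightarrow> real"
  assumes T: "finite T" "a \<in> T" and e: "0 < e"
    and conv: "\<And>p. poly_fun p \<Longrightarrow> (\<lambda>n. \<Sum>r\<in>S n. p (W n r)) \<longlonglongrightarrow> (\<Sum>b\<in>T. p (U b))"
  shows "\<forall>\<^sub>F n in sequentially. \<exists>r\<in>S n. (\<Sum>j\<le>i. (W n r j - U a j)\<^sup>2) < e"
proof -
  obtain p where p: "poly_fun p" "\<And>b. b \<in> T \<Longrightarrow> 0 \<le> p (U b)" "0 < p (U a)"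
    and close: "\<And>w. 0 < p w \<Longrightarrow> (\<Sum>j\<le>i. (w j - U a j)\<^sup>2) < e"
    using ex_poly_fun_peak[OF T e, of U i] by blast
  have "p (U a) \<le> (\<Sum>b\<in>T. p (U b))"
    using T p(2) by (intro member_le_sum) auto
  then have "0 < (\<Sum>b\<in>T. p (U b))"
    using p(3) by linarith
  then have "\<forall>\<^sub>F n in sequentially. 0 < (\<Sum>r\<in>S n. p (W n r))"
    by (rule order_tendstoD(1)[OF conv[OF p(1)]])
  then show ?thesis
  proof (rule eventually_mono)
    fix n assume "0 < (\<Sum>r\<in>S n. p (W n r))"
    then obtain r where "r \<in> S n" "0 < p (W n r)"
      using sum_nonpos[of "S n" "\<lambda>r. p (W n r)"] by (auto simp: not_less[symmetric])
    then show "\<exists>r\<in>S n. (\<Sum>j\<le>i. (W n r j - U a j)\<^sup>2) < e"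
      using close by blast
  qed
qed

lemma exists_roots_tendsto:
  fixes S :: "nat \<Rightarrow> 'a set" and W :: "nat \<Rightarrow> 'a \<Rightarrow> nat \<Rightarrow> real"
    and T :: "'b set" and U :: "'b \<Rightarrow> nat \<Rightarrow> real"
  assumes S: "\<And>n. finite (S n)" "\<And>n. S n \<noteq> {}" and T: "finite T" "a \<in> T"
    and conv: "\<And>p. poly_fun p \<Longrightarrow> (\<lambda>n. \<Sum>r\<in>S n. p (W n r)) \<longlonglongrightarrow> (\<Sum>b\<in>T. p (U b))"
  shows "\<exists>r. (\<forall>n. r n \<in> S n) \<and> (\<forall>j\<le>i. (\<lambda>n. W n (r n) j) \<longlonglongrightarrow> U a j)"
proof -
  define D where "D w = (\<Sum>j\<le>i. (w j - U a j)\<^sup>2)" for w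
  define r where "r n = arg_min_on (\<lambda>s. D (W n s)) (S n)" for n
  have r: "r n \<in> S n" "s \<in> S n \<Longrightarrow> D (W n (r n)) \<le> D (W n s)" for n s
    using arg_min_if_finite[OF S(1)[of n] S(2)[of n], of "\<lambda>s. D (W n s)"]
    by (auto simp: r_def not_less)
  have "(\<lambda>n. W n (r n) j) \<longlonglongrightarrow> U a j" if "j \<le> i" for j
  proof (rule tendstoI)
    fix e :: real assume "0 < e"
    with T conv have "\<forall>\<^sub>F n in sequentially. \<exists>s\<in>S n. D (W n s) < e\<^sup>2"
      unfolding D_def by (intro eventually_ex_close_to_root) simp_all
    then show "\<forall>\<^sub>F n in sequentially. dist (W n (r n) j) (U a j) < e"
    proof (rule eventually_mono)
      fix n assume "\<exists>s\<in>S n. D (W n s) < e\<^sup>2"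
      then have "D (W n (r n)) < e\<^sup>2"
        using r(2) by fastforce
      moreover have "(W n (r n) j - U a j)\<^sup>2 \<le> D (W n (r n))"
        unfolding D_def using that by (intro member_le_sum) auto
      ultimately have "\<bar>W n (r n) j - U a j\<bar>\<^sup>2 < e\<^sup>2"
        by simp
      then show "dist (W n (r n) j) (U a j) < e"
        using \<open>0 < e\<close> by (simp add: dist_real_def power2_less_imp_less)
    qed
  qed
  then show ?thesis
    using r(1) by blast
qed

theorem lemma5:
  fixes V :: "nat \<Rightarrow> 'a set" and E :: "nat \<Rightarrow> 'a \<Rightarrow> 'a \<Rightarrow> bool"
    and M :: "'v::polish_space measure" and F :: "'v \<Rightarrow> 'v \<Rightarrow> bool"
    and xi :: fm and \<phi> :: "nat \<Rightarrow> fm"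
  assumes fin: "\<And>n. finite (V n)" and ne: "\<And>n. V n \<noteq> {}"
    and conv: "FO_convergent V E"
    and lim: "modeling_limit V E M F"
    and xi_fm: "graph_fm xi" "card (fv xi) = 1"
    and xi_fin: "finite (def_set (space M) F xi)" and xi_ne: "def_set (space M) F xi \<noteq> {}"
    and xi_min: "\<And>chi. graph_fm chi \<Longrightarrow> card (fv chi) = 1 \<Longrightarrow>
        \<not> (def_set (space M) F chi \<noteq> {} \<and> def_set (space M) F chi \<subset> def_set (space M) F xi)"
    and xi_card: "\<And>n. card (def_set (V n) (E n) xi) = card (def_set (space M) F xi)"
    and enum: "surj \<phi>"
  shows "\<exists>(r :: nat \<Rightarrow> nat \<Rightarrow> 'a) (rL :: nat \<Rightarrow> 'v). \<forall>i.
      (\<forall>n. r i n \<in> def_set (V n) (E n) xi) \<and> rL i \<in> def_set (space M) F xi \<and>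
      (\<forall>j\<le>i. (\<lambda>n. stone (V n) (E n) (r i n) (\<phi> j)) \<longlonglongrightarrow> stone_mod M F (rL i) (\<phi> j)) \<and>
      (\<forall>j\<le>i. \<forall>i'\<ge>i. stone_mod M F (rL i) (\<phi> j) = stone_mod M F (rL i') (\<phi> j))"
proof -
  obtain x0 where x0: "fv xi = {x0}"
    using xi_fm(2) by (rule card_1_singletonE)
  obtain a where a: "a \<in> def_set (space M) F xi"
    using xi_ne by blast
  have roots_fin: "finite (def_set (V n) (E n) xi)" for n
    using fin by (simp add: def_set_def)
  have roots_ne: "def_set (V n) (E n) xi \<noteq> {}" for n
    using xi_card[of n] xi_fin xi_ne by auto
  have "\<exists>r. (\<forall>n. r n \<in> def_set (V n) (E n) xi) \<and>
      (\<forall>j\<le>i. (\<lambda>n. stone (V n) (E n) (r n) (\<phi> j)) \<longlonglongrightarrow> stone_mod M F a (\<phi> j))" for i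
    using roots_fin roots_ne xi_fin a
      tendsto_sum_poly_stone_roots[OF fin ne lim x0 xi_fm(1) xi_fin xi_card, where \<phi> = \<phi>]
    by (intro exists_roots_tendsto[where W = "\<lambda>n r j. stone (V n) (E n) r (\<phi> j)"
        and U = "\<lambda>b j. stone_mod M F b (\<phi> j)"]) auto
  then obtain r where "\<And>i. (\<forall>n. r i n \<in> def_set (V n) (E n) xi) \<and>
      (\<forall>j\<le>i. (\<lambda>n. stone (V n) (E n) (r i n) (\<phi> j)) \<longlonglongrightarrow> stone_mod M F a (\<phi> j))"
    by metis
  then show ?thesis
    using a by (intro exI[of _ r] exI[of _ "\<lambda>_. a"]) simp
qed

end
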